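(* Let $n\ge2$ and let $a,b\in H_n\rtimes S_n$ satisfy $\sigma_a=\sigma_b$. If there exists $x\in H_n$ with $x^{-1}ax=b$, then $t_{[i]}(a)=t_{[i]}(b)$ for every class $[i]_a$.
   Context: $\mathbb{N}=\{1,2,\dots\}$, $X_n=\{1,\dots,n\}\times\mathbb{N}$, permutations act on the right. $H_n$ is the group of bijections $g$ of $X_n$ with $z_i(g)\in\mathbb{N}$, $t_i(g)\in\mathbb{Z}$ such that $(i,m)g=(i,m+t_i(g))$ for all $m\ge z_i(g)$. $S_n$ acts by $(i,m)\sigma=(i\sigma,m)$, and $H_n\rtimes S_n\le\mathrm{Sym}(X_n)$ is generated by $H_n$ and these; each $g\in H_n\rtimes S_n$ is uniquely $g=\omega_g\sigma_g$ with $\omega_g\in H_n$, $\sigma_g\in S_n$, and $t_i(g):=t_i(\omega_g)$. The class $[i]_g$ is the orbit of $i\in\{1,\dots,n\}$ under $\langle\sigma_g\rangle$, and $t_{[i]}(g)=\sum_{k\in[i]_g}t_k(g)$ (since $\sigma_a=\sigma_b$, the classes of $a$ and $b$ coincide). *)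

theory Defs
  imports "HOL-Combinatorics.Permutations"
begin

text \<open>Permutations act on the right, so the product g h (first g, then h)
  corresponds to the function composition h \<circ> g.\<close>

definition Xn :: "nat \<Rightarrow> (nat \<times> nat) set" where
  "Xn n = {1..n} \<times> {1..}"

definition is_bij_Xn :: "nat \<Rightarrow> (nat \<times> nat \<Rightarrow> nat \<times> nat) \<Rightarrow> bool" where
  "is_bij_Xn n g \<longleftrightarrow> bij_betw g (Xn n) (Xn n) \<and> (\<forall>p. p \<notin> Xn n \<longrightarrow> g p = p)"

definition Hn :: "nat \<Rightarrow> (nat \<times> nat \<Rightarrow> nat \<times> nat) set" where
  "Hn n = {g. is_bij_Xn n g \<and>
     (\<forall>i\<in>{1..n}. \<exists>z::nat. \<exists>t::int. z \<ge> 1 \<and>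
        (\<forall>m\<ge>z. fst (g (i, m)) = i \<and> int (snd (g (i, m))) = int m + t))}"

definition tH :: "nat \<Rightarrow> (nat \<times> nat \<Rightarrow> nat \<times> nat) \<Rightarrow> int" where
  "tH i g = (THE t. \<exists>z::nat. \<forall>m\<ge>z. fst (g (i, m)) = i \<and> int (snd (g (i, m))) = int m + t)"

definition sact :: "nat \<Rightarrow> (nat \<Rightarrow> nat) \<Rightarrow> nat \<times> nat \<Rightarrow> nat \<times> nat" where
  "sact n \<sigma> p = (if p \<in> Xn n then (\<sigma> (fst p), snd p) else p)"

definition HSn :: "nat \<Rightarrow> (nat \<times> nat \<Rightarrow> nat \<times> nat) set" where
  "HSn n = {g. \<exists>\<omega> \<sigma>. \<omega> \<in> Hn n \<and> \<sigma> permutes {1..n} \<and> g = sact n \<sigma> \<circ> \<omega>}"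

definition sigma_of :: "nat \<Rightarrow> (nat \<times> nat \<Rightarrow> nat \<times> nat) \<Rightarrow> (nat \<Rightarrow> nat)" where
  "sigma_of n g = (THE \<sigma>. \<sigma> permutes {1..n} \<and> (\<exists>\<omega>\<in>Hn n. g = sact n \<sigma> \<circ> \<omega>))"

definition omega_of :: "nat \<Rightarrow> (nat \<times> nat \<Rightarrow> nat \<times> nat) \<Rightarrow> (nat \<times> nat \<Rightarrow> nat \<times> nat)" where
  "omega_of n g = (THE \<omega>. \<omega> \<in> Hn n \<and> (\<exists>\<sigma>. \<sigma> permutes {1..n} \<and> g = sact n \<sigma> \<circ> \<omega>))"

definition tHS :: "nat \<Rightarrow> nat \<Rightarrow> (nat \<times> nat \<Rightarrow> nat \<times> nat) \<Rightarrow> int" where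
  "tHS n i g = tH i (omega_of n g)"

definition cls :: "nat \<Rightarrow> (nat \<times> nat \<Rightarrow> nat \<times> nat) \<Rightarrow> nat \<Rightarrow> nat set" where
  "cls n g i = {(sigma_of n g ^^ k) i | k. True}"

definition tcls :: "nat \<Rightarrow> (nat \<times> nat \<Rightarrow> nat \<times> nat) \<Rightarrow> nat \<Rightarrow> int" where
  "tcls n g i = (\<Sum>k\<in>cls n g i. tHS n k g)"

end

theory Submission
  imports Defs
begin

text \<open>Every g = \<omega>\<sigma> in H_n \<rtimes> S_n eventually maps row k to row \<sigma>(k), translated by
  t_k(g); such eventual row translations compose additively and are unique. Hence
  for b = x\<inverse> a x, reading off row k gives t_k(b) = t_k(a) + t_{\<sigma>(k)}(x) - t_k(x).
  Summing over the \<sigma>-orbit [i], the terms t_{\<sigma>(k)}(x) are a reindexing of the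
  terms t_k(x), so the contributions of x cancel.\<close>

definition row_translation ::
    "(nat \<times> nat \<Rightarrow> nat \<times> nat) \<Rightarrow> nat \<Rightarrow> nat \<Rightarrow> int \<Rightarrow> bool" where
  "row_translation g k j t \<longleftrightarrow>
     (\<forall>\<^sub>F m in sequentially. fst (g (k, m)) = j \<and> int (snd (g (k, m))) = int m + t)"

lemma row_translation_unique:
  assumes "row_translation g k j t" and "row_translation g k j' t'"
  shows "j' = j \<and> t' = t"
proof -
  have "\<forall>\<^sub>F m in sequentially. j' = j \<and> t' = t"
    using eventually_conj[OF assms[unfolded row_translation_def]] by (rule eventually_mono) auto
  then show ?thesis by (auto dest: eventually_happens)
qed

lemma row_translation_tendsto:
  assumes "row_translation g k j t"
  shows "filterlim (\<lambda>m. snd (g (k, m))) sequentially sequentially"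
  unfolding filterlim_at_top
proof
  fix Z :: nat
  have large: "\<forall>\<^sub>F m in sequentially. int Z - t \<le> int m"
    by (rule eventually_sequentiallyI[of "nat (int Z - t)"]) linarith
  show "\<forall>\<^sub>F m in sequentially. Z \<le> snd (g (k, m))"
    using eventually_conj[OF large assms[unfolded row_translation_def]]
    by (rule eventually_mono) linarith
qed

lemma row_translation_comp:
  assumes g: "row_translation g k j t" and h: "row_translation h j l u"
  shows "row_translation (h \<circ> g) k l (t + u)"
proof -
  have "\<forall>\<^sub>F m in sequentially. fst (h (j, snd (g (k, m)))) = l \<and>
      int (snd (h (j, snd (g (k, m))))) = int (snd (g (k, m))) + u"
    using filterlim_iff[THEN iffD1, OF row_translation_tendsto[OF g]] h
    unfolding row_translation_def by blast
  with g[unfolded row_translation_def] show ?thesis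
    unfolding row_translation_def
    by (rule eventually_mono[OF eventually_conj]) (auto simp: prod_eq_iff)
qed

lemma row_translation_inv:
  assumes "inj x" and "row_translation x k j t"
  shows "row_translation (inv x) j k (- t)"
proof -
  obtain N where N: "\<And>m. m \<ge> N \<Longrightarrow> x (k, m) = (j, nat (int m + t)) \<and> int m + t \<ge> 0"
    using assms(2) unfolding row_translation_def eventually_sequentially
    by (metis (no_types, lifting) nat_int of_nat_0_le_iff prod.collapse)
  have "inv x (j, m) = (k, nat (int m - t))" if "m \<ge> N + nat \<bar>t\<bar>" for m
  proof -
    have "x (k, nat (int m - t)) = (j, m)"
      using N[of "nat (int m - t)"] that by auto
    then show ?thesis by (metis assms(1) inv_f_f)
  qed
  then show ?thesis
    unfolding row_translation_def eventually_sequentially by force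
qed

lemma Hn_permutes: "g \<in> Hn n \<Longrightarrow> g permutes Xn n"
  unfolding Hn_def is_bij_Xn_def by (auto intro: bij_imp_permutes)

lemma Hn_row_translation:
  assumes "g \<in> Hn n" and "i \<in> {1..n}"
  shows "row_translation g i i (tH i g)"
proof -
  obtain t where t: "row_translation g i i t"
    using assms unfolding Hn_def row_translation_def eventually_sequentially by blast
  have "tH i g = t"
    unfolding tH_def
  proof (rule the_equality)
    show "\<exists>z. \<forall>m\<ge>z. fst (g (i, m)) = i \<and> int (snd (g (i, m))) = int m + t"
      using t unfolding row_translation_def eventually_sequentially .
    show "t' = t" if "\<exists>z. \<forall>m\<ge>z. fst (g (i, m)) = i \<and> int (snd (g (i, m))) = int m + t'" for t'
      using row_translation_unique[OF t, of i t'] that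
      unfolding row_translation_def eventually_sequentially by blast
  qed
  with t show ?thesis by simp
qed

lemma sact_permutes:
  assumes "\<sigma> permutes {1..n}"
  shows "sact n \<sigma> permutes Xn n"
proof (rule bij_imp_permutes)
  have "bij_betw (map_prod \<sigma> id) (Xn n) (Xn n)"
    unfolding Xn_def by (intro bij_betw_map_prod permutes_imp_bij[OF assms] bij_betw_id)
  then show "bij_betw (sact n \<sigma>) (Xn n) (Xn n)"
    by (rule bij_betw_cong[THEN iffD1, rotated]) (auto simp: sact_def map_prod_def split: prod.split)
qed (simp add: sact_def)

lemma sact_row_translation:
  assumes "i \<in> {1..n}"
  shows "row_translation (sact n \<sigma>) i (\<sigma> i) 0"
  unfolding row_translation_def eventually_sequentially
  using assms by (intro exI[of _ 1]) (auto simp: sact_def Xn_def)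

lemma semidirect_row_translation:
  assumes "\<omega> \<in> Hn n" and "i \<in> {1..n}"
  shows "row_translation (sact n \<sigma> \<circ> \<omega>) i (\<sigma> i) (tH i \<omega>)"
  using row_translation_comp[OF Hn_row_translation[OF assms] sact_row_translation[OF assms(2)]]
  by simp

lemma semidirect_decomposition_unique:
  assumes "\<omega> \<in> Hn n" "\<omega>' \<in> Hn n" "\<sigma> permutes {1..n}" "\<sigma>' permutes {1..n}"
    and eq: "sact n \<sigma> \<circ> \<omega> = sact n \<sigma>' \<circ> \<omega>'"
  shows "\<sigma> = \<sigma>' \<and> \<omega> = \<omega>'"
proof
  show "\<sigma> = \<sigma>'"
  proof
    fix i
    show "\<sigma> i = \<sigma>' i"
    proof (cases "i \<in> {1..n}")
      case True
      then show ?thesis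
        using row_translation_unique semidirect_row_translation assms eq by metis
    next
      case False
      then show ?thesis using assms(3,4) by (simp add: permutes_not_in)
    qed
  qed
  show "\<omega> = \<omega>'"
  proof
    fix p
    have "sact n \<sigma> (\<omega> p) = sact n \<sigma> (\<omega>' p)"
      using eq \<open>\<sigma> = \<sigma>'\<close> by (metis comp_apply)
    then show "\<omega> p = \<omega>' p"
      using permutes_inj[OF sact_permutes[OF assms(3)]] by (simp add: inj_eq)
  qed
qed

lemma HSn_decomposition:
  assumes "g \<in> HSn n"
  shows "sigma_of n g permutes {1..n}" and "omega_of n g \<in> Hn n"
    and "g = sact n (sigma_of n g) \<circ> omega_of n g"
proof -
  obtain \<omega> \<sigma> where decomp: "\<omega> \<in> Hn n" "\<sigma> permutes {1..n}" "g = sact n \<sigma> \<circ> \<omega>"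
    using assms unfolding HSn_def by blast
  have "sigma_of n g = \<sigma>"
    unfolding sigma_of_def using decomp semidirect_decomposition_unique by (intro the_equality) blast+
  moreover have "omega_of n g = \<omega>"
    unfolding omega_of_def using decomp semidirect_decomposition_unique by (intro the_equality) blast+
  ultimately show "sigma_of n g permutes {1..n}" "omega_of n g \<in> Hn n"
    "g = sact n (sigma_of n g) \<circ> omega_of n g"
    using decomp by simp_all
qed

lemma HSn_row_translation:
  assumes "g \<in> HSn n" and "k \<in> {1..n}"
  shows "row_translation g k (sigma_of n g k) (tHS n k g)"
  using semidirect_row_translation[OF HSn_decomposition(2)[OF assms(1)] assms(2),
      where \<sigma> = "sigma_of n g"]
  unfolding tHS_def by (simp only: HSn_decomposition(3)[OF assms(1), symmetric])

lemma tHS_conjugate: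
  assumes "a \<in> HSn n" "b \<in> HSn n" "sigma_of n a = sigma_of n b" "x \<in> Hn n"
    and conj: "x \<circ> a \<circ> inv x = b" and k: "k \<in> {1..n}"
  shows "tHS n k b = tHS n k a + (tH (sigma_of n a k) x - tH k x)"
proof -
  let ?j = "sigma_of n a k"
  have j: "?j \<in> {1..n}"
    using k permutes_in_image[OF HSn_decomposition(1)[OF assms(1)]] by blast
  have "row_translation (inv x) k k (- tH k x)"
    by (rule row_translation_inv[OF permutes_inj[OF Hn_permutes[OF assms(4)]]
          Hn_row_translation[OF assms(4) k]])
  moreover have "row_translation a k ?j (tHS n k a)"
    using HSn_row_translation[OF assms(1) k] .
  moreover have "row_translation x ?j ?j (tH ?j x)"
    using Hn_row_translation[OF assms(4) j] .
  ultimately have "row_translation b k ?j (- tH k x + tHS n k a + tH ?j x)"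
    unfolding conj[symmetric] by (metis row_translation_comp comp_assoc)
  then show ?thesis
    using row_translation_unique HSn_row_translation[OF assms(2) k] assms(3) by force
qed

lemma permutes_image_orbit:
  assumes "\<sigma> permutes S" "finite S" "i \<in> S"
  shows "\<sigma> ` {(\<sigma> ^^ k) i | k. True} = {(\<sigma> ^^ k) i | k. True}"
proof (rule endo_inj_surj)
  show "finite {(\<sigma> ^^ k) i | k. True}"
    by (rule finite_subset[OF _ assms(2)]) (auto intro: permutes_in_funpow_image[OF assms(1,3)])
  show "\<sigma> ` {(\<sigma> ^^ k) i | k. True} \<subseteq> {(\<sigma> ^^ k) i | k. True}"
    by (auto intro: exI[of _ "Suc _"])
  show "inj_on \<sigma> {(\<sigma> ^^ k) i | k. True}"
    using permutes_inj[OF assms(1)] by (rule inj_on_subset) simp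
qed

theorem lemma3p9:
  fixes n :: nat and a b x :: "nat \<times> nat \<Rightarrow> nat \<times> nat"
  assumes "n \<ge> 2"
    and "a \<in> HSn n" and "b \<in> HSn n"
    and "sigma_of n a = sigma_of n b"
    and "x \<in> Hn n"
    and "x \<circ> a \<circ> inv x = b"
  shows "\<forall>i\<in>{1..n}. tcls n a i = tcls n b i"
proof
  fix i assume i: "i \<in> {1..n}"
  let ?\<sigma> = "sigma_of n a" and ?C = "cls n a i"
  have perm: "?\<sigma> permutes {1..n}"
    using HSn_decomposition(1)[OF assms(2)] .
  have orbit: "?\<sigma> ` ?C = ?C"
    unfolding cls_def using permutes_image_orbit[OF perm _ i] by simp
  have "tcls n b i = (\<Sum>k\<in>?C. tHS n k a + (tH (?\<sigma> k) x - tH k x))"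
    unfolding tcls_def cls_def assms(4)[symmetric]
  proof (rule sum.cong[OF refl])
    fix k assume "k \<in> {(?\<sigma> ^^ j) i | j. True}"
    then have "k \<in> {1..n}"
      using permutes_in_funpow_image[OF perm i] by blast
    then show "tHS n k b = tHS n k a + (tH (?\<sigma> k) x - tH k x)"
      by (rule tHS_conjugate[OF assms(2-6)])
  qed
  also have "\<dots> = tcls n a i + ((\<Sum>k\<in>?C. tH (?\<sigma> k) x) - (\<Sum>k\<in>?C. tH k x))"
    by (simp add: tcls_def sum.distrib sum_subtractf)
  also have "(\<Sum>k\<in>?C. tH (?\<sigma> k) x) = (\<Sum>k\<in>?C. tH k x)"
    using sum.reindex[OF inj_on_subset[OF permutes_inj[OF perm]], of ?C "\<lambda>k. tH k x"] orbit
    by simp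
  finally show "tcls n a i = tcls n b i"
    by simp
qed

end
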